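(* For all $\lambda\in\mathbf{k}$ and $v\in\mathcal{V}^{\mathrm{DR}}$, one has in $\mathcal{V}^{\mathrm{DR}}\otimes\mathcal{V}^{\mathrm{DR}}$: \[\Delta^{\mathcal{W},\mathrm{DR}}(\lambda+ve_1)=\lambda(1\otimes1)+\mathsf{r}\mathrm{row}\cdot\mathsf{r}\rho(v)\cdot\mathsf{r}\mathrm{col},\] i.e. $\Delta^{\mathcal{W},\mathrm{DR}}$ followed by $\mathcal{W}^{\mathrm{DR}}\otimes\mathcal{W}^{\mathrm{DR}}\hookrightarrow\mathcal{V}^{\mathrm{DR}}\otimes\mathcal{V}^{\mathrm{DR}}$ equals $\Delta_{\mathcal{O}^{\mathrm{DR}}_{\mathsf{mat}}}$ composed with the isomorphism $\mathcal{W}^{\mathrm{DR}}\cong\mathbf{k}\oplus(\mathcal{V}^{\mathrm{DR}},\cdot_{e_1})$.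
   Context: $\mathbf{k}$ is a commutative $\mathbb{Q}$-algebra. $\mathfrak{f}_2$ is the free Lie algebra on $e_0,e_1$, $\mathcal{V}^{\mathrm{DR}}=U(\mathfrak{f}_2)$, $e_\infty=-e_0-e_1$; $\mathcal{V}^{\mathrm{DR}}\otimes\mathcal{V}^{\mathrm{DR}}=U(\mathfrak{f}_2\oplus\mathfrak{f}_2)$ with $e_i=e_i\otimes1$, $f_i=1\otimes e_i$. $\mathrm{S}_{\mathfrak{g}}$ is the antiautomorphism of $U(\mathfrak{g})$ with $x\mapsto-x$ on $\mathfrak{g}$. $\rho:\mathcal{V}^{\mathrm{DR}}\to M_3(\mathcal{V}^{\mathrm{DR}}\otimes\mathcal{V}^{\mathrm{DR}})$ is the algebra morphism with $\rho(e_0)=\begin{pmatrix}e_0&0&0\\0&-e_1+f_0&-e_1\\0&-e_\infty-f_0&-e_\infty\end{pmatrix}$, $\rho(e_1)=\begin{pmatrix}e_1&-f_1&0\\-e_1&f_1&0\\0&0&0\end{pmatrix}$, and $\mathsf{r}\rho=M_3(\mathrm{S}_{\mathfrak{f}_2\oplus\mathfrak{f}_2})\circ{}^t(-)\circ\rho\circ\mathrm{S}_{\mathfrak{f}_2}$ (entrywise, transpose). $\mathsf{r}\mathrm{row}=(1,-1,0)$, $\mathsf{r}\mathrm{col}={}^t(e_1,-f_1,0)$. For an algebra $B$ and $e\in B$, $\mathbf{k}\oplus(B,\cdot_e)$ has product $(\lambda,b)(\lambda',b')=(\lambda\lambda',\lambda b'+\lambda'b+beb')$; $\Delta_{\mathcal{O}^{\mathrm{DR}}_{\mathsf{mat}}}(\lambda,v)=\lambda+\mathsf{r}\mathrm{row}\,\mathsf{r}\rho(v)\,\mathsf{r}\mathrm{col}$.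 $\mathcal{W}^{\mathrm{DR}}=\mathbf{k}\oplus\mathcal{V}^{\mathrm{DR}}e_1$ is a subalgebra, isomorphic to $\mathbf{k}\oplus(\mathcal{V}^{\mathrm{DR}},\cdot_{e_1})$ via $(\lambda,v)\mapsto\lambda+ve_1$, and freely generated by $e_0^ne_1$, $n\ge0$. $\Delta^{\mathcal{W},\mathrm{DR}}:\mathcal{W}^{\mathrm{DR}}\to\mathcal{W}^{\mathrm{DR}}\otimes\mathcal{W}^{\mathrm{DR}}$ is the algebra morphism with $\Delta^{\mathcal{W},\mathrm{DR}}(e_0^ne_1)=e_0^ne_1\otimes1+1\otimes e_0^ne_1-\sum_{k=0}^{n-1}e_0^ke_1\otimes e_0^{n-k-1}e_1$. *)

theory Defs
  imports Main
begin

text \<open>V^DR = U(f_2) is the free associative algebra k<e0,e1>;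
  an element is a finitely supported coefficient function on words in the letters X0 (=e0), X1 (=e1).
  V^DR (x) V^DR = U(f_2 + f_2) has k-basis the pairs of words (u,w) = u (x) w; the e_i act on the
  first, the f_i on the second component.\<close>

datatype x2 = X0 | X1

type_synonym 'k ncp = "x2 list \<Rightarrow> 'k"
type_synonym 'k tens = "x2 list \<times> x2 list \<Rightarrow> 'k"
type_synonym 'k mat3 = "nat \<Rightarrow> nat \<Rightarrow> 'k tens"

definition ncsupp :: "('k::zero) ncp \<Rightarrow> x2 list set" where
  "ncsupp a = {w. a w \<noteq> 0}"

definition ncmul :: "('k::comm_ring_1) ncp \<Rightarrow> 'k ncp \<Rightarrow> 'k ncp" where
  "ncmul a b = (\<lambda>w. \<Sum>i\<le>length w. a (take i w) * b (drop i w))"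

definition ncone :: "('k::comm_ring_1) ncp" where
  "ncone = (\<lambda>w. if w = [] then 1 else 0)"

definition ncgen :: "x2 \<Rightarrow> ('k::comm_ring_1) ncp" where
  "ncgen x = (\<lambda>w. if w = [x] then 1 else 0)"

definition ncadd :: "('k::comm_ring_1) ncp \<Rightarrow> 'k ncp \<Rightarrow> 'k ncp" where
  "ncadd a b = (\<lambda>w. a w + b w)"

definition ncscal :: "'k::comm_ring_1 \<Rightarrow> 'k ncp \<Rightarrow> 'k ncp" where
  "ncscal c a = (\<lambda>w. c * a w)"

text \<open>Antiautomorphism S of U(f_2): x |-> -x on generators.\<close>
definition ncS :: "('k::comm_ring_1) ncp \<Rightarrow> 'k ncp" where
  "ncS a = (\<lambda>w. (-1) ^ length w * a (rev w))"

definition tmul :: "('k::comm_ring_1) tens \<Rightarrow> 'k tens \<Rightarrow> 'k tens" where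
  "tmul a b = (\<lambda>(u, w). \<Sum>i\<le>length u. \<Sum>j\<le>length w.
                 a (take i u, take j w) * b (drop i u, drop j w))"

definition tbasis :: "x2 list \<Rightarrow> x2 list \<Rightarrow> ('k::comm_ring_1) tens" where
  "tbasis u w = (\<lambda>p. if p = (u, w) then 1 else 0)"

definition tone :: "('k::comm_ring_1) tens" where
  "tone = tbasis [] []"

definition tzero :: "('k::comm_ring_1) tens" where
  "tzero = (\<lambda>p. 0)"

definition tadd :: "('k::comm_ring_1) tens \<Rightarrow> 'k tens \<Rightarrow> 'k tens" where
  "tadd a b = (\<lambda>p. a p + b p)"

definition tneg :: "('k::comm_ring_1) tens \<Rightarrow> 'k tens" where
  "tneg a = (\<lambda>p. - a p)"

definition tscal :: "'k::comm_ring_1 \<Rightarrow> 'k tens \<Rightarrow> 'k tens" where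
  "tscal c a = (\<lambda>p. c * a p)"

definition teg :: "x2 \<Rightarrow> ('k::comm_ring_1) tens" where
  "teg x = tbasis [x] []"

definition tfg :: "x2 \<Rightarrow> ('k::comm_ring_1) tens" where
  "tfg x = tbasis [] [x]"

definition tS :: "('k::comm_ring_1) tens \<Rightarrow> 'k tens" where
  "tS a = (\<lambda>(u, w). (-1) ^ (length u + length w) * a (rev u, rev w))"

definition teinf :: "('k::comm_ring_1) tens" where
  "teinf = tneg (tadd (teg X0) (teg X1))"

definition matmul :: "('k::comm_ring_1) mat3 \<Rightarrow> 'k mat3 \<Rightarrow> 'k mat3" where
  "matmul A B = (\<lambda>i j p. \<Sum>k<3. tmul (A i k) (B k j) p)"

definition matid :: "('k::comm_ring_1) mat3" where
  "matid = (\<lambda>i j. if i = j then tone else tzero)"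

definition mat_of_rows :: "'k tens list list \<Rightarrow> 'k mat3" where
  "mat_of_rows L = (\<lambda>i j. L ! i ! j)"

fun rho_letter :: "x2 \<Rightarrow> ('k::comm_ring_1) mat3" where
  "rho_letter X0 = mat_of_rows
     [[teg X0, tzero, tzero],
      [tzero, tadd (tneg (teg X1)) (tfg X0), tneg (teg X1)],
      [tzero, tadd (tneg teinf) (tneg (tfg X0)), tneg teinf]]"
| "rho_letter X1 = mat_of_rows
     [[teg X1, tneg (tfg X1), tzero],
      [tneg (teg X1), tfg X1, tzero],
      [tzero, tzero, tzero]]"

text \<open>rho on a word is the product of the matrices of its letters; extended linearly
  (this is the unique algebra morphism with the prescribed values on e0, e1).\<close>
definition rho_word :: "x2 list \<Rightarrow> ('k::comm_ring_1) mat3" where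
  "rho_word w = foldr (\<lambda>x M. matmul (rho_letter x) M) w matid"

definition rho :: "('k::comm_ring_1) ncp \<Rightarrow> 'k mat3" where
  "rho v = (\<lambda>i j p. \<Sum>w\<in>ncsupp v. v w * rho_word w i j p)"

definition rrho :: "('k::comm_ring_1) ncp \<Rightarrow> 'k mat3" where
  "rrho v = (\<lambda>i j. tS (rho (ncS v) j i))"

definition rrow :: "('k::comm_ring_1) tens list" where
  "rrow = [tone, tneg tone, tzero]"

definition rcol :: "('k::comm_ring_1) tens list" where
  "rcol = [teg X1, tneg (tfg X1), tzero]"

definition DeltaO :: "'k::comm_ring_1 \<Rightarrow> 'k ncp \<Rightarrow> 'k tens" where
  "DeltaO lam v = (\<lambda>p. lam * tone p +
      (\<Sum>i<3. \<Sum>j<3. tmul (tmul (rrow ! i) (rrho v i j)) (rcol ! j) p))"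

text \<open>Value of Delta^W on the free generator e0^n e1.\<close>
definition dgen :: "nat \<Rightarrow> ('k::comm_ring_1) tens" where
  "dgen n = (\<lambda>p. tbasis (replicate n X0 @ [X1]) [] p + tbasis [] (replicate n X0 @ [X1]) p
     - (\<Sum>k<n. tbasis (replicate k X0 @ [X1]) (replicate (n - k - 1) X0 @ [X1]) p))"

text \<open>Delta^W on a word of W (empty or ending in e1): factor it as a product of generators
  e0^n1 e1 ... e0^nr e1 and multiply the values. (Words not in W get the junk value 0.)\<close>
fun dWw :: "nat \<Rightarrow> x2 list \<Rightarrow> ('k::comm_ring_1) tens" where
  "dWw n [] = (if n = 0 then tone else tzero)"
| "dWw n (X0 # w) = dWw (Suc n) w"
| "dWw n (X1 # w) = tmul (dgen n) (dWw 0 w)"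

definition DeltaW :: "('k::comm_ring_1) ncp \<Rightarrow> 'k tens" where
  "DeltaW x = (\<lambda>p. \<Sum>w\<in>ncsupp x. x w * dWw 0 w p)"

end

theory Submission
  imports Defs "HOL-Library.Function_Algebras"
begin

(* Both sides are linear in v and agree on the scalar part, so it suffices to treat a single
   word w.  The antipode reverses words and negates letters, and every entry of rho(e0), rho(e1)
   is of degree one, so rrho(w) is the product of the transposed letter matrices in the order of
   the letters of w.  The row vector rrow . rrho(w) can therefore be followed letter by letter:
   writing w = u e0^m with u in W, it is
     (D (e0^m (x) 1),  - D (1 (x) e0^m) + sum_{k<m} D (e0^k e1 (x) e0^(m-k-1)),  minus their sum)
   with D = Delta^W(u).  Multiplying by rcol amounts to appending one more letter e1 and reading
   off the first entry, which gives D . Delta^W(e0^m e1) = Delta^W(w e1). *)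

section \<open>The tensor square as an algebra\<close>

lemma sum_triangle_shift:
  "(\<Sum>i\<le>n. \<Sum>i'\<le>i. F i' i) = (\<Sum>i'\<le>(n::nat). \<Sum>k\<le>n - i'. F i' (i' + k) :: 'a::comm_monoid_add)"
proof -
  have "(\<Sum>i\<le>n. \<Sum>i'\<le>i. F i' i) = (\<Sum>(i', k)\<in>{(i', k). i' + k \<le> n}. F i' (i' + k))"
    using sum.triangle_reindex_eq[of "\<lambda>i' k. F i' (i' + k)" n] by simp
  also have "\<dots> = (\<Sum>(i', k)\<in>(SIGMA i':{..n}. {..n - i'}). F i' (i' + k))"
    by (rule sum.cong) auto
  also have "\<dots> = (\<Sum>i'\<le>n. \<Sum>k\<le>n - i'. F i' (i' + k))"
    by (simp add: sum.Sigma)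
  finally show ?thesis .
qed

lemma sum_fun_apply: "(\<Sum>k\<in>S. f k) p = (\<Sum>k\<in>S. f k p)"
  by (induction S rule: infinite_finite_induct) auto

lemma sum_if_take_eq:
  "(\<Sum>i\<le>length u. if take i u = x then g i else 0) = (if take (length x) u = x then g (length x) else 0)"
proof -
  have "(\<Sum>i\<le>length u. if take i u = x then g i else 0)
      = (\<Sum>i\<le>length u. if i = length x then (if take (length x) u = x then g i else 0) else 0)"
    by (rule sum.cong) auto
  then show ?thesis
    by (auto simp: sum.delta')
qed

lemma tadd_eq_plus: "tadd a b = a + b"
  by (simp add: tadd_def fun_eq_iff)

lemma tneg_eq_uminus: "tneg a = - a"
  by (simp add: tneg_def fun_eq_iff)

lemma tzero_eq_zero: "tzero = 0"
  by (simp add: tzero_def fun_eq_iff)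

lemma tbasis_Nil_Nil: "tbasis [] [] = tone"
  by (simp add: tone_def)

lemma tmul_assoc: "tmul (tmul a b) c = tmul a (tmul b c)"
proof (intro ext, clarify)
  fix u w :: "x2 list"
  define G where "G i' i j' j =
    a (take i' u, take j' w) * b (drop i' (take i u), drop j' (take j w)) * c (drop i u, drop j w)"
    for i' i j' j
  have "tmul (tmul a b) c (u, w) = (\<Sum>i\<le>length u. \<Sum>j\<le>length w. \<Sum>i'\<le>i. \<Sum>j'\<le>j. G i' i j' j)"
    unfolding tmul_def G_def by (auto simp: sum_distrib_right min_absorb1 intro!: sum.cong)
  also have "\<dots> = (\<Sum>i\<le>length u. \<Sum>i'\<le>i. \<Sum>j\<le>length w. \<Sum>j'\<le>j. G i' i j' j)"
    by (intro sum.cong refl sum.swap)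
  also have "\<dots> = (\<Sum>i'\<le>length u. \<Sum>k\<le>length u - i'. \<Sum>j'\<le>length w. \<Sum>l\<le>length w - j'.
                       G i' (i' + k) j' (j' + l))"
    by (simp only: sum_triangle_shift)
  also have "\<dots> = (\<Sum>i'\<le>length u. \<Sum>j'\<le>length w. \<Sum>k\<le>length u - i'. \<Sum>l\<le>length w - j'.
                       G i' (i' + k) j' (j' + l))"
    by (intro sum.cong refl sum.swap)
  also have "\<dots> = tmul a (tmul b c) (u, w)"
    unfolding tmul_def G_def
    by (auto simp: sum_distrib_left mult.assoc drop_take add.commute intro!: sum.cong)
  finally show "tmul (tmul a b) c (u, w) = tmul a (tmul b c) (u, w)" .
qed

lemma tmul_add_left: "tmul (a + b) c = tmul a c + tmul b c"
  by (simp add: tmul_def fun_eq_iff distrib_right sum.distrib)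

lemma tmul_add_right: "tmul a (b + c) = tmul a b + tmul a c"
  by (simp add: tmul_def fun_eq_iff distrib_left sum.distrib)

lemma tmul_minus_left: "tmul (- a) c = - tmul a c"
  by (simp add: tmul_def fun_eq_iff sum_negf)

lemma tmul_minus_right: "tmul a (- c) = - tmul a c"
  by (simp add: tmul_def fun_eq_iff sum_negf)

lemma tmul_diff_left: "tmul (a - b) c = tmul a c - tmul b c"
  by (simp add: tmul_def fun_eq_iff left_diff_distrib sum_subtractf)

lemma tmul_diff_right: "tmul a (b - c) = tmul a b - tmul a c"
  by (simp add: tmul_def fun_eq_iff right_diff_distrib sum_subtractf)

lemma tmul_zero_left: "tmul 0 c = 0"
  by (simp add: tmul_def fun_eq_iff)

lemma tmul_zero_right: "tmul a 0 = 0"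
  by (simp add: tmul_def fun_eq_iff)

lemma tmul_sum_left: "tmul (\<Sum>k\<in>S. f k) c = (\<Sum>k\<in>S. tmul (f k) c)"
  by (induction S rule: infinite_finite_induct) (simp_all only: not_False_eq_True sum.infinite sum.empty sum.insert tmul_zero_left tmul_add_left)

lemma tmul_sum_right: "tmul c (\<Sum>k\<in>S. f k) = (\<Sum>k\<in>S. tmul c (f k))"
  by (induction S rule: infinite_finite_induct) (simp_all only: not_False_eq_True sum.infinite sum.empty sum.insert tmul_zero_right tmul_add_right)

lemmas tmul_linear = tmul_add_left tmul_add_right tmul_minus_left tmul_minus_right
  tmul_diff_left tmul_diff_right tmul_zero_left tmul_zero_right tmul_sum_left tmul_sum_right

lemma tmul_tscal_left: "tmul (tscal c a) b = tscal c (tmul a b)"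
  by (simp add: tmul_def tscal_def fun_eq_iff sum_distrib_left mult.assoc)

lemma tmul_tscal_right: "tmul a (tscal c b) = tscal c (tmul a b)"
  by (simp add: tmul_def tscal_def fun_eq_iff sum_distrib_left mult.left_commute)

lemma tscal_sum: "tscal c (\<Sum>k\<in>S. f k) = (\<Sum>k\<in>S. tscal c (f k))"
  by (simp add: tscal_def fun_eq_iff sum_fun_apply sum_distrib_left)

lemma tmul_tbasis: "tmul (tbasis x y) (tbasis x' y') = tbasis (x @ x') (y @ y')"
proof (intro ext, clarify)
  fix u w :: "x2 list"
  have "tmul (tbasis x y) (tbasis x' y') (u, w) =
     (\<Sum>i\<le>length u. if take i u = x then (\<Sum>j\<le>length w. if take j w = y then
        (if drop i u = x' \<and> drop j w = y' then 1 else 0) else 0) else 0)"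
    unfolding tmul_def tbasis_def by (auto intro!: sum.cong)
  also have "\<dots> = (if take (length x) u = x \<and> take (length y) w = y
                      \<and> drop (length x) u = x' \<and> drop (length y) w = y' then 1 else 0)"
    by (simp add: sum_if_take_eq)
  also have "\<dots> = tbasis (x @ x') (y @ y') (u, w)"
    unfolding tbasis_def by (auto simp: append_eq_conv_conj) (metis append_take_drop_id)+
  finally show "tmul (tbasis x y) (tbasis x' y') (u, w) = tbasis (x @ x') (y @ y') (u, w)" .
qed

lemma tmul_tone_left: "tmul tone a = a"
proof (intro ext, clarify)
  fix u w :: "x2 list"
  have "tmul tone a (u, w) = (\<Sum>i\<le>length u. if take i u = [] then
      (\<Sum>j\<le>length w. if take j w = [] then a (drop i u, drop j w) else 0) else 0)"
    unfolding tmul_def tone_def tbasis_def by (auto intro!: sum.cong)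
  then show "tmul tone a (u, w) = a (u, w)"
    by (simp only: sum_if_take_eq) simp
qed

lemma tmul_tone_right: "tmul a tone = a"
proof (intro ext, clarify)
  fix u w :: "x2 list"
  have "tmul a tone (u, w) =
      (\<Sum>i\<le>length u. \<Sum>j\<le>length w. if i = length u \<and> j = length w then a (u, w) else 0)"
    unfolding tmul_def tone_def tbasis_def prod.case by (intro sum.cong refl) auto
  also have "\<dots> = (\<Sum>i\<le>length u. if i = length u then
      (\<Sum>j\<le>length w. if j = length w then a (u, w) else 0) else 0)"
    by (intro sum.cong refl) simp
  finally show "tmul a tone (u, w) = a (u, w)"
    by simp
qed

lemma sum_atMost_rev: "(\<Sum>i\<le>n. f i) = (\<Sum>i\<le>(n::nat). f (n - i) :: 'a::comm_monoid_add)"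
  using sum.atLeastAtMost_rev[of f 0 n] by (simp add: atLeast0AtMost)

lemma tS_tmul: "tS (tmul a b) = tmul (tS b) (tS a)"
proof (intro ext, clarify)
  fix u w :: "x2 list"
  let ?s = "\<lambda>n. (-1::'a) ^ n"
  have "tS (tmul a b) (u, w) = ?s (length u + length w) * (\<Sum>i\<le>length u. \<Sum>j\<le>length w.
      a (take i (rev u), take j (rev w)) * b (drop i (rev u), drop j (rev w)))"
    by (simp add: tS_def tmul_def)
  also have "\<dots> = ?s (length u + length w) * (\<Sum>i\<le>length u. \<Sum>j\<le>length w.
      a (take (length u - i) (rev u), take (length w - j) (rev w))
      * b (drop (length u - i) (rev u), drop (length w - j) (rev w)))"
    by (subst (1 2) sum_atMost_rev) (rule refl)
  also have "\<dots> = (\<Sum>i\<le>length u. \<Sum>j\<le>length w.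
      (?s (i + j) * b (rev (take i u), rev (take j w)))
      * (?s (length u - i + (length w - j)) * a (rev (drop i u), rev (drop j w))))"
    unfolding sum_distrib_left
  proof (intro sum.cong refl)
    fix i j assume "i \<in> {..length u}" and "j \<in> {..length w}"
    then have "?s (length u + length w) = ?s (i + j) * ?s (length u - i + (length w - j))"
      by (simp add: power_add[symmetric])
    then show "?s (length u + length w) * (a (take (length u - i) (rev u), take (length w - j) (rev w))
        * b (drop (length u - i) (rev u), drop (length w - j) (rev w)))
      = (?s (i + j) * b (rev (take i u), rev (take j w)))
        * (?s (length u - i + (length w - j)) * a (rev (drop i u), rev (drop j w)))"
      using \<open>i \<in> {..length u}\<close> \<open>j \<in> {..length w}\<close> by (simp add: take_rev drop_rev mult_ac)
  qed
  also have "\<dots> = tmul (tS b) (tS a) (u, w)"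
    by (simp add: tS_def tmul_def add_ac)
  finally show "tS (tmul a b) (u, w) = tmul (tS b) (tS a) (u, w)" .
qed

lemma tS_add: "tS (a + b) = tS a + tS b"
  by (simp add: tS_def fun_eq_iff distrib_left)

lemma tS_minus: "tS (- a) = - tS a"
  by (simp add: tS_def fun_eq_iff)

lemma tS_diff: "tS (a - b) = tS a - tS b"
  by (simp add: tS_def fun_eq_iff right_diff_distrib)

lemma tS_zero: "tS 0 = 0"
  by (simp add: tS_def fun_eq_iff)

lemma tS_sum: "tS (\<Sum>k\<in>S. f k) = (\<Sum>k\<in>S. tS (f k))"
  by (induction S rule: infinite_finite_induct)
    (simp_all only: not_False_eq_True sum.infinite sum.empty sum.insert tS_zero tS_add)

lemma tS_tscal: "tS (tscal c a) = tscal c (tS a)"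
  by (simp add: tS_def tscal_def fun_eq_iff mult_ac)

lemma tS_tbasis: "tS (tbasis x y) = tscal ((-1) ^ (length x + length y)) (tbasis (rev x) (rev y))"
  by (auto simp: tS_def tscal_def tbasis_def fun_eq_iff)

lemma tS_tone: "tS tone = tone"
  by (simp add: tone_def tS_tbasis tscal_def)

lemma tscal_tscal: "tscal c (tscal d a) = tscal (c * d) a"
  by (simp add: tscal_def mult.assoc)

lemma tscal_minus_one: "tscal (-1) a = - a"
  by (simp add: tscal_def fun_eq_iff)

section \<open>Delta^W on words\<close>

lemma dWw_replicate_X0: "dWw n (replicate m X0 @ w) = dWw (n + m) w"
  by (induction m arbitrary: n) auto

lemma dWw_append:
  assumes "u \<noteq> []" and "last u = X1"
  shows "dWw n (u @ w) = tmul (dWw n u) (dWw 0 w)"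
  using assms
proof (induction u arbitrary: n)
  case Nil
  then show ?case by simp
next
  case (Cons x u)
  show ?case
  proof (cases x)
    case X0
    then show ?thesis using Cons by (auto split: if_splits)
  next
    case X1
    then show ?thesis using Cons by (cases "u = []") (simp_all add: tmul_tone_right tmul_assoc)
  qed
qed

lemma dWw_append_generator:
  assumes "u = [] \<or> last u = X1"
  shows "dWw 0 (u @ replicate m X0 @ [X1]) = tmul (dWw 0 u) (dgen m)"
  using assms by (cases "u = []") (simp_all add: dWw_append dWw_replicate_X0 tmul_tone_left tmul_tone_right)

lemma dgen_eq:
  "dgen n = tbasis (replicate n X0 @ [X1]) [] + tbasis [] (replicate n X0 @ [X1])
     - (\<Sum>k<n. tbasis (replicate k X0 @ [X1]) (replicate (n - k - 1) X0 @ [X1]))"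
  by (simp add: dgen_def fun_eq_iff sum_fun_apply)

lemma split_trailing_X0s: "\<exists>u m. w = u @ replicate m X0 \<and> (u = [] \<or> last u = X1)"
proof (induction w rule: rev_induct)
  case Nil
  then show ?case by simp
next
  case (snoc x w)
  then obtain u m where w: "w = u @ replicate m X0" and u: "u = [] \<or> last u = X1"
    by blast
  show ?case
  proof (cases x)
    case X0
    then have "w @ [x] = u @ replicate (Suc m) X0"
      by (simp add: w replicate_append_same)
    with u show ?thesis
      by blast
  next
    case X1
    then show ?thesis
      by (intro exI[of _ "w @ [x]"] exI[of _ 0]) simp
  qed
qed

section \<open>The row vector rrow . rrho(w) of a word\<close>

(* rrho at a single word w: the antipode sends w to (-1)^|w| (rev w). *)
definition rrho_word :: "x2 list \<Rightarrow> ('k::comm_ring_1) mat3" where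
  "rrho_word w i j = tscal ((-1) ^ length w) (tS (rho_word (rev w) j i))"

definition rrow_rrho_word :: "x2 list \<Rightarrow> nat \<Rightarrow> ('k::comm_ring_1) tens" where
  "rrow_rrho_word w j = rrho_word w 0 j - rrho_word w 1 j"

lemma matmul_apply: "matmul A B i j = (\<Sum>k<3. tmul (A i k) (B k j))"
  by (simp add: matmul_def fun_eq_iff sum_fun_apply)

lemma tS_rho_letter:
  assumes "j < 3" and "k < 3"
  shows "tS (rho_letter x j k) = - rho_letter x j k"
  using assms
  by (cases x) (auto simp: less_Suc_eq numeral_3_eq_3 mat_of_rows_def tadd_eq_plus tneg_eq_uminus
      tzero_eq_zero teinf_def tS_add tS_minus tS_diff tS_zero teg_def tfg_def tS_tbasis tscal_minus_one)

lemma rrho_word_snoc: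
  assumes "j < 3"
  shows "rrho_word (w @ [x]) i j = (\<Sum>k<3. tmul (rrho_word w i k) (rho_letter x j k))"
proof -
  have "rrho_word (w @ [x]) i j = tscal ((-1) ^ length w)
      (tscal (-1) (\<Sum>k<3. tS (tmul (rho_letter x j k) (rho_word (rev w) k i))))"
    by (simp add: rrho_word_def rho_word_def matmul_apply tS_sum tscal_tscal mult.commute)
  also have "\<dots> = (\<Sum>k<3. tmul (rrho_word w i k) (rho_letter x j k))"
    using assms
    by (auto simp: tscal_sum tS_tmul tS_rho_letter rrho_word_def tmul_tscal_left tmul_minus_right
        tscal_minus_one intro!: sum.cong)
  finally show ?thesis .
qed

lemma rrow_rrho_word_snoc:
  "j < 3 \<Longrightarrow> rrow_rrho_word (w @ [x]) j = (\<Sum>k<3. tmul (rrow_rrho_word w k) (rho_letter x j k))"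
  by (simp add: rrow_rrho_word_def rrho_word_snoc sum_subtractf[symmetric] tmul_diff_left)

lemma rrow_rrho_word_Nil:
  "rrow_rrho_word [] 0 = tone" "rrow_rrho_word [] 1 = - tone" "rrow_rrho_word [] 2 = 0"
  by (simp_all add: rrow_rrho_word_def rrho_word_def rho_word_def matid_def tS_tone tzero_eq_zero
      tS_zero tscal_def fun_eq_iff)

lemmas sum_lessThan_3 = numeral_3_eq_3 lessThan_Suc

lemma rrow_rrho_word_snoc_X1:
  "rrow_rrho_word (w @ [X1]) 0 = tmul (rrow_rrho_word w 0) (teg X1) - tmul (rrow_rrho_word w 1) (tfg X1)"
  "rrow_rrho_word (w @ [X1]) 1 = - rrow_rrho_word (w @ [X1]) 0"
  "rrow_rrho_word (w @ [X1]) 2 = 0"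
  by (simp_all add: rrow_rrho_word_snoc sum_lessThan_3 mat_of_rows_def tneg_eq_uminus tzero_eq_zero
      tmul_linear)

lemma rrow_rrho_word_snoc_X0:
  assumes "rrow_rrho_word w 2 = - rrow_rrho_word w 0 - (rrow_rrho_word w 1 :: 'k::comm_ring_1 tens)"
  shows "rrow_rrho_word (w @ [X0]) 0 = (tmul (rrow_rrho_word w 0) (teg X0) :: 'k tens)"
    and "rrow_rrho_word (w @ [X0]) 1
           = (tmul (rrow_rrho_word w 1) (tfg X0) + tmul (rrow_rrho_word w 0) (teg X1) :: 'k tens)"
    and "rrow_rrho_word (w @ [X0]) 2
           = - rrow_rrho_word (w @ [X0]) 0 - (rrow_rrho_word (w @ [X0]) 1 :: 'k tens)"
  by (simp_all add: assms[unfolded numeral_2_eq_2 One_nat_def] rrow_rrho_word_snoc sum_lessThan_3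
      mat_of_rows_def tneg_eq_uminus tzero_eq_zero tadd_eq_plus teinf_def tmul_linear algebra_simps)

lemma rrow_rrho_word_append_X0s:
  fixes D :: "'k::comm_ring_1 tens"
  assumes "rrow_rrho_word u 0 = D" and "rrow_rrho_word u 1 = - D" and "rrow_rrho_word u 2 = (0 :: 'k tens)"
  shows "rrow_rrho_word (u @ replicate m X0) 0 = tmul D (tbasis (replicate m X0) [])
    \<and> rrow_rrho_word (u @ replicate m X0) 1 = - tmul D (tbasis [] (replicate m X0))
        + (\<Sum>k<m. tmul D (tbasis (replicate k X0 @ [X1]) (replicate (m - k - 1) X0)))
    \<and> rrow_rrho_word (u @ replicate m X0) 2
        = - rrow_rrho_word (u @ replicate m X0) 0 - (rrow_rrho_word (u @ replicate m X0) 1 :: 'k tens)"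
proof (induction m)
  case 0
  show ?case
    using assms by (simp add: tbasis_Nil_Nil tmul_tone_right)
next
  case (Suc m)
  let ?w = "u @ replicate m X0"
  from Suc.IH have r0: "rrow_rrho_word ?w 0 = tmul D (tbasis (replicate m X0) [])"
    and r1: "rrow_rrho_word ?w 1 = - tmul D (tbasis [] (replicate m X0))
        + (\<Sum>k<m. tmul D (tbasis (replicate k X0 @ [X1]) (replicate (m - k - 1) X0)))"
    and r2: "rrow_rrho_word ?w 2 = - rrow_rrho_word ?w 0 - (rrow_rrho_word ?w 1 :: 'k tens)"
    by blast+
  have w: "u @ replicate (Suc m) X0 = ?w @ [X0]"
    by (simp add: replicate_append_same)
  have shift: "X0 # replicate (m - Suc k) X0 = replicate (m - k) X0" if "k < m" for k
    using that by (metis Suc_diff_Suc replicate_Suc)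
  have sum_shift: "(\<Sum>k<m. tmul D (tbasis (replicate k X0 @ [X1]) (replicate (m - k - 1) X0 @ [X0])))
      = (\<Sum>k<m. tmul D (tbasis (replicate k X0 @ [X1]) (replicate (Suc m - k - 1) X0)))"
    by (intro sum.cong refl) (simp add: shift replicate_append_same)
  have n0: "rrow_rrho_word (u @ replicate (Suc m) X0) 0 = tmul D (tbasis (replicate (Suc m) X0) [])"
    unfolding w rrow_rrho_word_snoc_X0(1)[OF r2] r0
    by (simp add: tmul_assoc tmul_tbasis teg_def replicate_append_same)
  have "rrow_rrho_word (u @ replicate (Suc m) X0) 1 = - tmul D (tbasis [] (replicate m X0 @ [X0]))
      + (\<Sum>k<m. tmul D (tbasis (replicate k X0 @ [X1]) (replicate (m - k - 1) X0 @ [X0])))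
      + tmul D (tbasis (replicate m X0 @ [X1]) [])"
    unfolding w rrow_rrho_word_snoc_X0(2)[OF r2] r0 r1
    by (simp add: tmul_linear tmul_assoc tmul_tbasis teg_def tfg_def)
  also have "\<dots> = - tmul D (tbasis [] (replicate (Suc m) X0))
      + (\<Sum>k<Suc m. tmul D (tbasis (replicate k X0 @ [X1]) (replicate (Suc m - k - 1) X0)))"
    unfolding sum_shift by (simp add: replicate_append_same)
  finally show ?case
    using n0 rrow_rrho_word_snoc_X0(3)[OF r2, folded w] by blast
qed

lemma rrow_rrho_word_in_W:
  assumes "u = [] \<or> last u = X1"
  shows "rrow_rrho_word u 0 = (dWw 0 u :: 'k::comm_ring_1 tens)
    \<and> rrow_rrho_word u 1 = (- dWw 0 u :: 'k tens) \<and> rrow_rrho_word u 2 = (0 :: 'k tens)"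
  using assms
proof (induction u rule: length_induct)
  case (1 u)
  show ?case
  proof (cases "u = []")
    case True
    then show ?thesis
      by (simp add: rrow_rrho_word_Nil[unfolded One_nat_def])
  next
    case False
    then obtain w where u: "u = w @ [X1]"
      using "1.prems" by (metis append_butlast_last_id)
    obtain u' m where w: "w = u' @ replicate m X0" and u': "u' = [] \<or> last u' = X1"
      using split_trailing_X0s by blast
    define D :: "'k tens" where "D = dWw 0 u'"
    have "rrow_rrho_word u' 0 = D \<and> rrow_rrho_word u' 1 = - D \<and> rrow_rrho_word u' 2 = (0 :: 'k tens)"
      using "1.IH"[rule_format, of u'] u' by (simp add: D_def u w)
    then have a: "rrow_rrho_word w 0 = tmul D (tbasis (replicate m X0) [])"
      and b: "rrow_rrho_word w 1 = - tmul D (tbasis [] (replicate m X0))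
        + (\<Sum>k<m. tmul D (tbasis (replicate k X0 @ [X1]) (replicate (m - k - 1) X0)))"
      using rrow_rrho_word_append_X0s[of u' D m] by (simp_all add: w)
    have "rrow_rrho_word u 0 = tmul (rrow_rrho_word w 0) (teg X1) - tmul (rrow_rrho_word w 1) (tfg X1)"
      by (simp add: u rrow_rrho_word_snoc_X1)
    also have "\<dots> = tmul D (dgen m)"
      unfolding a b by (simp add: dgen_eq tmul_linear tmul_assoc tmul_tbasis teg_def tfg_def algebra_simps)
    also have "\<dots> = dWw 0 u"
      by (simp add: D_def u w dWw_append_generator[OF u'])
    finally have "rrow_rrho_word u 0 = (dWw 0 u :: 'k tens)" .
    then show ?thesis
      unfolding u rrow_rrho_word_snoc_X1(2,3) by simp
  qed
qed

lemma rrow_rrho_word_rcol_eq_dWw: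
  "(\<Sum>j<3. tmul (rrow_rrho_word w j) (rcol ! j)) = (dWw 0 (w @ [X1]) :: 'k::comm_ring_1 tens)"
  using rrow_rrho_word_in_W[of "w @ [X1]", where 'k = 'k]
  by (simp add: rrow_rrho_word_snoc_X1 sum_lessThan_3 rcol_def tneg_eq_uminus tzero_eq_zero tmul_linear)

section \<open>Linear extension\<close>

lemma ncmul_ncgen_X1:
  "ncmul v (ncgen X1) u = (if u \<noteq> [] \<and> last u = X1 then v (butlast u) else 0)"
proof -
  have drop_eq: "drop i u = [X1] \<longleftrightarrow> u \<noteq> [] \<and> i = length u - 1 \<and> last u = X1"
    if "i \<le> length u" for i
    using that by (cases u rule: rev_cases) (auto simp: drop_append le_Suc_eq Suc_diff_le)
  have "ncmul v (ncgen X1) u = (\<Sum>i\<le>length u. if i = length u - 1 then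
      (if u \<noteq> [] \<and> last u = X1 then v (take i u) else 0) else 0)"
    unfolding ncmul_def ncgen_def by (intro sum.cong refl) (auto simp: drop_eq)
  then show ?thesis
    by (simp add: butlast_conv_take)
qed

lemma DeltaW_eq_sum:
  fixes v :: "'k::comm_ring_1 ncp"
  assumes "finite (ncsupp v)"
  shows "DeltaW (ncadd (ncscal lam ncone) (ncmul v (ncgen X1)))
     = (\<lambda>p. lam * tone p + (\<Sum>w\<in>ncsupp v. v w * dWw 0 (w @ [X1]) p))"
proof
  fix p
  define x where "x = ncadd (ncscal lam ncone) (ncmul v (ncgen X1))"
  have x: "x u = (if u = [] then lam else 0) + (if u \<noteq> [] \<and> last u = X1 then v (butlast u) else 0)"
    for u
    by (simp add: x_def ncadd_def ncscal_def ncone_def ncmul_ncgen_X1)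
  have supp: "ncsupp x \<subseteq> insert [] ((\<lambda>w. w @ [X1]) ` ncsupp v)"
  proof
    fix u assume "u \<in> ncsupp x"
    then show "u \<in> insert [] ((\<lambda>w. w @ [X1]) ` ncsupp v)"
      by (cases u rule: rev_cases) (auto simp: ncsupp_def x split: if_splits)
  qed
  have "DeltaW x p = (\<Sum>w\<in>insert [] ((\<lambda>w. w @ [X1]) ` ncsupp v). x w * dWw 0 w p)"
    unfolding DeltaW_def using assms supp
    by (intro sum.mono_neutral_left) (auto simp: ncsupp_def)
  also have "\<dots> = x [] * dWw 0 [] p + (\<Sum>w\<in>ncsupp v. x (w @ [X1]) * dWw 0 (w @ [X1]) p)"
    using assms by (subst sum.insert) (auto simp: sum.reindex inj_on_def)
  also have "\<dots> = lam * tone p + (\<Sum>w\<in>ncsupp v. v w * dWw 0 (w @ [X1]) p)"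
    by (simp add: x)
  finally show "DeltaW (ncadd (ncscal lam ncone) (ncmul v (ncgen X1))) p
      = lam * tone p + (\<Sum>w\<in>ncsupp v. v w * dWw 0 (w @ [X1]) p)"
    by (simp only: x_def)
qed

lemma ncsupp_ncS: "ncsupp (ncS v) = rev ` ncsupp v"
proof -
  have "ncS v w \<noteq> 0 \<longleftrightarrow> v (rev w) \<noteq> 0" for w
    by (metis left_minus_one_mult_self mult_zero_right ncS_def)
  then show ?thesis
    unfolding ncsupp_def by (auto simp: image_iff) (metis rev_rev_ident)
qed

lemma rrho_eq_sum:
  fixes v :: "'k::comm_ring_1 ncp"
  assumes "finite (ncsupp v)"
  shows "rrho v i j = (\<Sum>w\<in>ncsupp v. tscal (v w) (rrho_word w i j))"
proof -
  have "rho (ncS v) j i = (\<lambda>p. \<Sum>w\<in>ncsupp v. ncS v (rev w) * rho_word (rev w) j i p)"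
    by (simp add: rho_def ncsupp_ncS sum.reindex)
  also have "\<dots> = (\<Sum>w\<in>ncsupp v. tscal (v w) (tscal ((-1) ^ length w) (rho_word (rev w) j i)))"
    by (simp add: fun_eq_iff sum_fun_apply tscal_def ncS_def mult_ac)
  finally show ?thesis
    by (simp add: rrho_def tS_sum tS_tscal rrho_word_def)
qed

lemma sum_rrow_rrho_word:
  "(\<Sum>i<3. \<Sum>j<3. tmul (tmul (rrow ! i) (rrho_word w i j)) (rcol ! j))
     = (\<Sum>j<3. tmul (rrow_rrho_word w j) (rcol ! j))"
  by (subst sum.swap, intro sum.cong refl)
    (simp add: sum_lessThan_3 rrow_def rrow_rrho_word_def tneg_eq_uminus tzero_eq_zero
      tmul_tone_left tmul_linear)

lemma DeltaO_eq_sum: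
  fixes v :: "'k::comm_ring_1 ncp"
  assumes "finite (ncsupp v)"
  shows "DeltaO lam v = (\<lambda>p. lam * tone p + (\<Sum>w\<in>ncsupp v. v w * dWw 0 (w @ [X1]) p))"
proof -
  have "(\<Sum>i<3. \<Sum>j<3. tmul (tmul (rrow ! i) (rrho v i j)) (rcol ! j))
      = (\<Sum>i<3. \<Sum>j<3. \<Sum>w\<in>ncsupp v. tscal (v w) (tmul (tmul (rrow ! i) (rrho_word w i j)) (rcol ! j)))"
    by (simp add: rrho_eq_sum[OF assms] tmul_sum_left tmul_sum_right tmul_tscal_left tmul_tscal_right)
  also have "\<dots> = (\<Sum>w\<in>ncsupp v. tscal (v w)
      (\<Sum>i<3. \<Sum>j<3. tmul (tmul (rrow ! i) (rrho_word w i j)) (rcol ! j)))"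
    by (simp add: tscal_sum sum.swap[of _ "ncsupp v"])
  also have "\<dots> = (\<Sum>w\<in>ncsupp v. tscal (v w) (dWw 0 (w @ [X1])))"
    by (simp add: sum_rrow_rrho_word rrow_rrho_word_rcol_eq_dWw)
  finally have "\<And>p. (\<Sum>i<3. \<Sum>j<3. tmul (tmul (rrow ! i) (rrho v i j)) (rcol ! j)) p
      = (\<Sum>w\<in>ncsupp v. tscal (v w) (dWw 0 (w @ [X1]))) p"
    by simp
  then show ?thesis
    by (simp add: DeltaO_def sum_fun_apply tscal_def)
qed

theorem theorem3p18:
  fixes lam :: "'k::comm_ring_1" and v :: "'k ncp"
  assumes Qalg: "\<And>n::nat. n \<noteq> 0 \<Longrightarrow> \<exists>y::'k. of_nat n * y = 1"
    and fin: "finite (ncsupp v)"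
  shows "DeltaW (ncadd (ncscal lam ncone) (ncmul v (ncgen X1))) = DeltaO lam v"
  using DeltaW_eq_sum[OF fin] DeltaO_eq_sum[OF fin] by simp

end
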